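(* $U(1,\infty)=\{2314,\,3124,\,3142\}$, and for every integer $t\ge 2$, $$U(1,t)=\{2314,\,3124,\,3142,\,(t+1)\,t\,(t-1)\cdots 2\,1\,(t+2)\},$$ where the last permutation has length $t+2$ and lists $t+1,t,\dots,1$ in decreasing order followed by $t+2$.
   Context: Forkstack sorting with capacities $s,t\in\{1,2,3,\dots\}\cup\{\infty\}$: a permutation $\pi=\pi_1\cdots\pi_n$ of $\{1,\dots,n\}$ is placed on an input stack with $\pi_1$ on top; a working stack and an output stack are initially empty. A move either (i) removes the top $k$ elements of the input stack ($1\le k\le s$) and places them as a block, relative order unchanged, on top of the working stack, or (ii) removes the top $l$ elements of the working stack ($1\le l\le t$) and places them as a block, relative order unchanged, on top of the output stack. $\pi$ is sortable if some sequence of moves ends with input and working stacks empty and the output stack reading $1,2,\dots,n$ from top to bottom. $\mathcal F(s,t)$ is the set of sortable permutations. A permutation $\sigma$ is involved in $\pi$ if some subsequence of $\pi$ of length $|\sigma|$ has entries in the same relative order as $\sigma$. $U(s,t)$ is the set of involvement-minimal permutations not in $\mathcal F(s,t)$. Permutations are written in one-line notation. *)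

theory Defs
  imports Main "HOL-Library.Extended_Nat"
begin

text \<open>Lists of naturals; the head of a list is the top of the stack.
  A permutation of length n is a list containing each of 1..n exactly once,
  written in one-line notation.\<close>

definition is_perm :: "nat list \<Rightarrow> bool" where
  "is_perm p \<longleftrightarrow> distinct p \<and> set p = {1..length p}"

text \<open>States: (input stack, working stack, output stack).\<close>
type_synonym fstate = "nat list \<times> nat list \<times> nat list"

inductive fork_move :: "enat \<Rightarrow> enat \<Rightarrow> fstate \<Rightarrow> fstate \<Rightarrow> bool" for s t where
  push: "\<lbrakk>1 \<le> k; enat k \<le> s; k \<le> length inp\<rbrakk> \<Longrightarrow>
     fork_move s t (inp, w, out) (drop k inp, take k inp @ w, out)"
| pop: "\<lbrakk>1 \<le> l; enat l \<le> t; l \<le> length w\<rbrakk> \<Longrightarrow>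
     fork_move s t (inp, w, out) (inp, drop l w, take l w @ out)"

definition fork_sortable :: "enat \<Rightarrow> enat \<Rightarrow> nat list \<Rightarrow> bool" where
  "fork_sortable s t p \<longleftrightarrow>
     (fork_move s t)\<^sup>*\<^sup>* (p, [], []) ([], [], [1..<length p + 1])"

definition forkF :: "enat \<Rightarrow> enat \<Rightarrow> nat list set" where
  "forkF s t = {p. is_perm p \<and> fork_sortable s t p}"

definition involved :: "nat list \<Rightarrow> nat list \<Rightarrow> bool" where
  "involved q p \<longleftrightarrow> (\<exists>I. length (nths p I) = length q \<and>
      (\<forall>i < length q. \<forall>j < length q. q ! i < q ! j \<longleftrightarrow> nths p I ! i < nths p I ! j))"

definition forkU :: "enat \<Rightarrow> enat \<Rightarrow> nat list set" where
  "forkU s t = {p. is_perm p \<and> p \<notin> forkF s t \<and>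
      (\<forall>q. is_perm q \<and> involved q p \<and> q \<noteq> p \<longrightarrow> q \<in> forkF s t)}"

end

(*
  With s = 1 the next entry can only be pushed on its own, so a permutation p that avoids 2314,
  3124, 3142 and, for finite t, the pattern (t+1) t ... 1 (t+2) (here decr_then_max t) can be
  sorted greedily: when the values above m are already output, push entries until m has been
  pushed, then pop the block b, b+1, ..., m lying on top of the working stack in one move.
  Avoiding the three patterns of length 4 maintains the invariant gaps_filled, which forces the
  values at most m pushed since m to be exactly m, m-1, ..., b in this order, i.e. a block on
  top of the stack.  A block longer than t would form the pattern (t+1) t ... 1 (t+2) together
  with the entry pushed last, which exceeds m.
  Conversely, along any sorting run the output is a suffix of 1, ..., n; from each basis
  element only a few such states are reachable, and the sorted state is not among them.  As no
  basis element involves another, they are exactly the minimal unsortable permutations.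
*)

theory Submission
  imports Defs "HOL-Library.Sublist"
begin

section \<open>Order isomorphism and pattern involvement\<close>

text \<open>Phrased via the pairs of the zipped lists so that it passes to every set of pairs drawn
  from them (order_iso_subset_zip), in particular to subsequences.\<close>

definition order_iso :: "nat list \<Rightarrow> nat list \<Rightarrow> bool" where
  "order_iso xs ys \<longleftrightarrow> length xs = length ys \<and>
     (\<forall>(a, b) \<in> set (zip xs ys). \<forall>(c, d) \<in> set (zip xs ys). a < c \<longleftrightarrow> b < d)"

lemma order_iso_iff_nth:
  "order_iso xs ys \<longleftrightarrow> length xs = length ys \<and>
     (\<forall>i < length xs. \<forall>j < length xs. xs ! i < xs ! j \<longleftrightarrow> ys ! i < ys ! j)"
  unfolding order_iso_def set_zip by (intro conj_cong refl) fastforce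

lemma order_iso_trans: "order_iso xs ys \<Longrightarrow> order_iso ys zs \<Longrightarrow> order_iso xs zs"
  by (simp add: order_iso_iff_nth)

lemma order_iso_subset_zip:
  assumes "order_iso xs ys" "length xs' = length ys'" "set (zip xs' ys') \<subseteq> set (zip xs ys)"
  shows "order_iso xs' ys'"
  using assms unfolding order_iso_def by blast

lemma order_iso_subseq:
  assumes iso: "order_iso xs ys" and sub: "subseq xs' xs"
  obtains ys' where "subseq ys' ys" "order_iso xs' ys'"
proof -
  obtain I where I: "xs' = nths xs I" using sub subseq_conv_nths by blast
  define zs where "zs = nths (zip xs ys) I"
  have "xs' = map fst zs"
    using iso by (simp add: I zs_def nths_map[symmetric] order_iso_def)
  moreover have "subseq (map snd zs) ys"
  proof -
    have "subseq (map snd zs) (map snd (zip xs ys))"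
      unfolding zs_def by (intro subseq_map) (auto simp: subseq_conv_nths)
    then show ?thesis using iso by (simp add: order_iso_def)
  qed
  moreover have "set zs \<subseteq> set (zip xs ys)"
    unfolding zs_def by (rule set_nths_subset)
  ultimately show ?thesis
    using that order_iso_subset_zip[OF iso] by (simp add: zip_map_fst_snd)
qed

lemma involved_iff_subseq: "involved q p \<longleftrightarrow> (\<exists>xs. subseq xs p \<and> order_iso q xs)"
proof
  assume "involved q p"
  then obtain I where "length (nths p I) = length q"
    "\<forall>i < length q. \<forall>j < length q. q ! i < q ! j \<longleftrightarrow> nths p I ! i < nths p I ! j"
    unfolding involved_def by blast
  then show "\<exists>xs. subseq xs p \<and> order_iso q xs"
    by (intro exI[of _ "nths p I"]) (auto simp: subseq_conv_nths order_iso_iff_nth)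
next
  assume "\<exists>xs. subseq xs p \<and> order_iso q xs"
  then show "involved q p"
    unfolding involved_def subseq_conv_nths order_iso_iff_nth by auto
qed

lemma involved_trans: "involved q r \<Longrightarrow> involved r p \<Longrightarrow> involved q p"
  unfolding involved_iff_subseq
  by (metis order_iso_subseq order_iso_trans subseq_order.trans)

lemma involved_length_le: "involved q p \<Longrightarrow> length q \<le> length p"
  by (auto simp: involved_iff_subseq order_iso_def dest: list_emb_length)

lemma is_perm_nth_eq_card:
  assumes q: "is_perm q" and i: "i < length q"
  shows "q ! i = card {j. j < length q \<and> q ! j \<le> q ! i}"
proof -
  have d: "distinct q" and s: "set q = {1..length q}" using q by (auto simp: is_perm_def)
  have "inj_on (nth q) {j. j < length q \<and> q ! j \<le> q ! i}"
    using d by (auto simp: inj_on_def nth_eq_iff_index_eq)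
  moreover have "nth q ` {j. j < length q \<and> q ! j \<le> q ! i} = {1..q ! i}"
  proof
    show "nth q ` {j. j < length q \<and> q ! j \<le> q ! i} \<subseteq> {1..q ! i}"
      using s nth_mem by fastforce
    show "{1..q ! i} \<subseteq> nth q ` {j. j < length q \<and> q ! j \<le> q ! i}"
    proof
      fix v assume v: "v \<in> {1..q ! i}"
      have "q ! i \<le> length q" using s nth_mem[OF i] by auto
      then have "v \<in> set q" using s v by auto
      then obtain j where "j < length q" "q ! j = v" by (auto simp: in_set_conv_nth)
      then show "v \<in> nth q ` {j. j < length q \<and> q ! j \<le> q ! i}" using v by auto
    qed
  qed
  ultimately show ?thesis by (metis card_atLeastAtMost card_image diff_Suc_1)
qed

lemma order_iso_perm_eq:
  assumes "is_perm q" "is_perm r" "order_iso q r"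
  shows "q = r"
proof (rule nth_equalityI)
  show len: "length q = length r" using assms(3) by (simp add: order_iso_def)
  fix i assume i: "i < length q"
  have "{j. j < length q \<and> q ! j \<le> q ! i} = {j. j < length r \<and> r ! j \<le> r ! i}"
    using assms(3) i by (auto simp: order_iso_iff_nth not_less[symmetric])
  then show "q ! i = r ! i"
    using is_perm_nth_eq_card[OF assms(1) i] is_perm_nth_eq_card[OF assms(2)] i len by simp
qed

lemma involved_length_eq:
  assumes "is_perm q" "is_perm p" "involved q p" "length p \<le> length q"
  shows "q = p"
proof -
  obtain xs where "subseq xs p" "order_iso q xs" using assms(3) involved_iff_subseq by blast
  moreover from this have "xs = p"
    using assms(4) by (metis list_emb_length order_iso_def le_antisym subseq_same_length)
  ultimately show ?thesis using order_iso_perm_eq assms(1,2) by blast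
qed

lemma subseq_map_nth:
  assumes "sorted_wrt (<) is" "set is \<subseteq> {..<length xs}"
  shows "subseq (map ((!) xs) is) xs"
proof -
  have "subseq is [0..<length xs]"
    by (rule sorted_subset_imp_subseq) (use assms in auto)
  then have "subseq (map ((!) xs) is) (map ((!) xs) [0..<length xs])" by (rule subseq_map)
  then show ?thesis by (simp add: map_nth)
qed

lemma involved_at_indices:
  assumes "sorted_wrt (<) is" "set is \<subseteq> {..<length p}" "order_iso q (map ((!) p) is)"
  shows "involved q p"
  using assms subseq_map_nth involved_iff_subseq by blast

section \<open>The patterns (t+1) t ... 1 (t+2)\<close>

definition decr_then_max :: "nat \<Rightarrow> nat list" where
  "decr_then_max t = rev [1..<t + 2] @ [t + 2]"

lemma length_decr_then_max [simp]: "length (decr_then_max t) = t + 2"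
  by (simp add: decr_then_max_def)

lemma is_perm_decr_then_max: "is_perm (decr_then_max t)"
  by (auto simp: is_perm_def decr_then_max_def)

lemma nth_rev_upt_snoc:
  "i < t + 2 \<Longrightarrow> (rev [a..<a + t + 1] @ [v]) ! i = (if i \<le> t then a + t - i else v)"
  by (auto simp: nth_append rev_nth simp del: upt_Suc)

lemma order_iso_decr_then_max:
  assumes "a + t < v"
  shows "order_iso (decr_then_max t) (rev [a..<a + t + 1] @ [v])"
proof -
  have "decr_then_max t = rev [1..<1 + t + 1] @ [t + 2]"
    by (simp add: decr_then_max_def)
  then have dec: "i < t + 2 \<Longrightarrow> decr_then_max t ! i = (if i \<le> t then 1 + t - i else t + 2)" for i
    using nth_rev_upt_snoc by presburger
  show ?thesis unfolding order_iso_iff_nth length_decr_then_max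
  proof (intro conjI allI impI)
    show "t + 2 = length (rev [a..<a + t + 1] @ [v])" by simp
    fix i j assume "i < t + 2" "j < t + 2"
    then show "decr_then_max t ! i < decr_then_max t ! j \<longleftrightarrow>
        (rev [a..<a + t + 1] @ [v]) ! i < (rev [a..<a + t + 1] @ [v]) ! j"
      using assms by (simp only: dec nth_rev_upt_snoc) auto
  qed
qed

lemma sorted_wrt_subseq: "subseq xs ys \<Longrightarrow> sorted_wrt R ys \<Longrightarrow> sorted_wrt R xs"
  by (induction rule: list_emb.induct) (auto elim: list_emb_set)

lemma subseq_decr_then_max_nth_less:
  assumes "subseq xs (decr_then_max t)" "i < j" "Suc j < length xs"
  shows "xs ! j < xs ! i"
proof -
  obtain ys zs where xs: "xs = ys @ zs" and ys: "subseq ys (rev [1..<t + 2])" and zs: "subseq zs [t + 2]"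
    using assms(1) unfolding decr_then_max_def by (rule subseq_appendE)
  have "length zs \<le> 1" using list_emb_length[OF zs] by simp
  then have "j < length ys" using assms(3) xs by simp
  moreover have "sorted_wrt (>) ys"
    by (rule sorted_wrt_subseq[OF ys]) (simp add: sorted_wrt_rev del: upt_Suc)
  ultimately show ?thesis using assms(2) xs by (simp add: sorted_wrt_iff_nth_less nth_append)
qed

lemma involved_decr_then_max_nth_less:
  assumes "involved q (decr_then_max t)" "i < j" "Suc j < length q"
  shows "q ! j < q ! i"
proof -
  obtain xs where "subseq xs (decr_then_max t)" "order_iso q xs"
    using assms(1) involved_iff_subseq by blast
  then show ?thesis
    using subseq_decr_then_max_nth_less[of xs t i j] assms(2,3) by (auto simp: order_iso_iff_nth)
qed

section \<open>Greedy sorting of permutations avoiding the basis\<close>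

lemma nth_drop_take: "j + i < k \<Longrightarrow> j + i < length xs \<Longrightarrow> drop j (take k xs) ! i = xs ! (j + i)"
  by simp

lemma in_set_drop_take_iff:
  "x \<in> set (drop j (take k xs)) \<longleftrightarrow> (\<exists>i. j \<le> i \<and> i < k \<and> i < length xs \<and> xs ! i = x)"
proof
  assume "x \<in> set (drop j (take k xs))"
  then obtain i where "i < length (drop j (take k xs))" "drop j (take k xs) ! i = x"
    by (auto simp: in_set_conv_nth)
  then have "j + i < k" "j + i < length xs" "xs ! (j + i) = x"
    by (auto simp: nth_drop_take)
  then show "\<exists>i. j \<le> i \<and> i < k \<and> i < length xs \<and> xs ! i = x"
    using le_add1 by blast
next
  assume "\<exists>i. j \<le> i \<and> i < k \<and> i < length xs \<and> xs ! i = x"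
  then obtain i where "j \<le> i" "i < k" "i < length xs" "xs ! i = x" by blast
  then have "i - j < length (drop j (take k xs))" "drop j (take k xs) ! (i - j) = x"
    by (auto simp: nth_drop_take)
  then show "x \<in> set (drop j (take k xs))" by (metis nth_mem)
qed

lemma subseq_drop_take: "subseq (drop j (take k xs)) xs"
  by (metis prefix_imp_subseq subseq_order.trans suffix_drop suffix_imp_subseq take_is_prefix)

lemma sorted_wrt_filter_if:
  "sorted_wrt (\<lambda>x y. P x \<longrightarrow> P y \<longrightarrow> R x y) xs \<Longrightarrow> sorted_wrt R (filter P xs)"
  by (induction xs) auto

lemma sorted_wrt_greater_eq_rev_upt:
  assumes "sorted_wrt (>) xs" "set xs = {b..m}"
  shows "xs = rev [b..<Suc m]"
proof -
  have "sorted_wrt (<) (rev xs)" using assms(1) by (simp add: sorted_wrt_rev)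
  then have "rev xs = [b..<Suc m]"
    using assms(2) by (intro sorted_distinct_set_unique)
      (auto simp: strict_sorted_iff atLeastLessThanSuc_atLeastAtMost simp del: upt_Suc)
  then show ?thesis by (metis rev_rev_ident)
qed

lemma prefix_rev_upt:
  assumes "b \<le> a"
  shows "prefix (rev [a..<m]) (rev [b..<m])"
proof (cases "a \<le> m")
  case True
  then have "[b..<m] = [b..<a] @ [a..<m]"
    using upt_add_eq_append[OF assms, of "m - a"] by simp
  then show ?thesis by simp
qed simp

lemma subset_if_filter_eq_rev_upt:
  "filter P xs = rev [b..<Suc m] \<Longrightarrow> {b..m} \<subseteq> set xs"
  by (metis atLeastLessThanSuc_atLeastAtMost filter_is_subset set_rev set_upt)

locale basis_avoiding =
  fixes p :: "nat list" and t :: enat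
  assumes perm: "is_perm p" and t_ge_1: "1 \<le> t"
    and avoids_2314: "\<not> involved [2,3,1,4] p"
    and avoids_3124: "\<not> involved [3,1,2,4] p"
    and avoids_3142: "\<not> involved [3,1,4,2] p"
    and avoids_decr_then_max: "\<And>t'. t = enat t' \<Longrightarrow> \<not> involved (decr_then_max t') p"
begin

abbreviation n :: nat where "n \<equiv> length p"

abbreviation move :: "fstate \<Rightarrow> fstate \<Rightarrow> bool" where "move \<equiv> fork_move 1 t"

lemma distinct_p: "distinct p"
  using perm by (simp add: is_perm_def)

lemma nth_p_bounds: "i < n \<Longrightarrow> 1 \<le> p ! i \<and> p ! i \<le> n"
  using perm nth_mem by (fastforce simp: is_perm_def)

lemma position_exists: "1 \<le> v \<Longrightarrow> v \<le> n \<Longrightarrow> \<exists>i < n. p ! i = v"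
  using perm by (metis atLeastAtMost_iff in_set_conv_nth is_perm_def)

lemma nth_p_eq_iff: "i < n \<Longrightarrow> j < n \<Longrightarrow> p ! i = p ! j \<longleftrightarrow> i = j"
  using distinct_p by (simp add: nth_eq_iff_index_eq)

definition greedy_state :: "nat \<Rightarrow> nat \<Rightarrow> fstate" where
  "greedy_state m k = (drop k p, rev (filter (\<lambda>x. x \<le> m) (take k p)), [Suc m..<Suc n])"

text \<open>In gaps_filled m k, the value at position i is pushed and still on the working stack and
  the value at position i' is a smaller one pushed later; all values between them must occur
  between positions i and i'.\<close>

definition gaps_filled :: "nat \<Rightarrow> nat \<Rightarrow> bool" where
  "gaps_filled m k \<longleftrightarrow> (\<forall>i i' q. i < i' \<longrightarrow> i' < k \<longrightarrow> q < n \<longrightarrow> p ! i \<le> m \<longrightarrow>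
      p ! i' < p ! q \<longrightarrow> p ! q < p ! i \<longrightarrow> i < q \<and> q < i')"

definition greedy_inv :: "nat \<Rightarrow> nat \<Rightarrow> bool" where
  "greedy_inv m k \<longleftrightarrow> m \<le> n \<and> k \<le> n \<and> (\<forall>i. k \<le> i \<longrightarrow> i < n \<longrightarrow> p ! i \<le> m) \<and>
     gaps_filled m k \<and> (k = 0 \<or> m < p ! (k - 1))"

lemma involved_at_4:
  "a < b \<Longrightarrow> b < c \<Longrightarrow> c < d \<Longrightarrow> d < n \<Longrightarrow> order_iso q [p ! a, p ! b, p ! c, p ! d] \<Longrightarrow>
    involved q p"
  by (rule involved_at_indices[of "[a, b, c, d]"]) auto

lemma gaps_filledD:
  "gaps_filled m k \<Longrightarrow> i < i' \<Longrightarrow> i' < k \<Longrightarrow> q < n \<Longrightarrow> p ! i \<le> m \<Longrightarrow>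
    p ! i' < p ! q \<Longrightarrow> p ! q < p ! i \<Longrightarrow> i < q \<and> q < i'"
  unfolding gaps_filled_def by blast

lemma greedy_state_start: "greedy_state n 0 = (p, [], [])"
  by (simp add: greedy_state_def)

lemma greedy_state_sorted: "greedy_state 0 n = ([], [], [1..<Suc n])"
proof -
  have "filter (\<lambda>x. x \<le> 0) p = []"
    using perm by (auto simp: filter_empty_conv is_perm_def)
  then show ?thesis by (simp add: greedy_state_def)
qed

lemma greedy_inv_start: "greedy_inv n 0"
  unfolding greedy_inv_def gaps_filled_def using nth_p_bounds by auto

lemma gaps_filled_mono: "gaps_filled m k \<Longrightarrow> m' \<le> m \<Longrightarrow> gaps_filled m' k"
  unfolding gaps_filled_def by (meson le_trans)

lemma push_step:
  assumes "k < n" "p ! k \<le> m"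
  shows "move (greedy_state m k) (greedy_state m (Suc k))"
proof -
  have "move (drop k p, rev (filter (\<lambda>x. x \<le> m) (take k p)), [Suc m..<Suc n])
     (drop 1 (drop k p), take 1 (drop k p) @ rev (filter (\<lambda>x. x \<le> m) (take k p)), [Suc m..<Suc n])"
    by (rule fork_move.push) (use assms in \<open>auto simp: one_enat_def\<close>)
  moreover have "drop k p = p ! k # drop (Suc k) p"
    using assms(1) by (rule Cons_nth_drop_Suc[symmetric])
  moreover have "take (Suc k) p = take k p @ [p ! k]"
    using assms(1) by (rule take_Suc_conv_app_nth)
  ultimately show ?thesis
    using assms(2) by (simp add: greedy_state_def)
qed

lemma push_steps:
  "k \<le> k' \<Longrightarrow> k' \<le> n \<Longrightarrow> (\<forall>i. k \<le> i \<longrightarrow> i < k' \<longrightarrow> p ! i \<le> m) \<Longrightarrow>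
    move\<^sup>*\<^sup>* (greedy_state m k) (greedy_state m k')"
proof (induction k' rule: dec_induct)
  case base
  then show ?case by simp
next
  case (step i)
  then have "move (greedy_state m i) (greedy_state m (Suc i))"
    by (intro push_step) auto
  with step show ?case by (simp add: rtranclp.rtrancl_into_rtrancl)
qed

lemma pop_single:
  assumes "j < n" "p ! j = m"
  shows "move (greedy_state m (Suc j)) (greedy_state (m - 1) (Suc j))"
proof -
  define W where "W = rev (filter (\<lambda>x. x \<le> m - 1) (take (Suc j) p))"
  have m: "1 \<le> m" "m \<le> n" using nth_p_bounds[OF assms(1)] assms(2) by auto
  have "m \<in> set (drop j p)" using assms by (simp add: Cons_nth_drop_Suc[symmetric])
  then have "m \<notin> set (take j p)"
    using set_take_disj_set_drop_if_distinct[OF distinct_p, of j j] by blast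
  then have "filter (\<lambda>x. x \<le> m) (take j p) = filter (\<lambda>x. x \<le> m - 1) (take j p)"
  proof (intro filter_cong refl)
    fix x assume "x \<in> set (take j p)"
    with \<open>m \<notin> set (take j p)\<close> have "x \<noteq> m" by blast
    then show "x \<le> m \<longleftrightarrow> x \<le> m - 1" by arith
  qed
  then have stack: "rev (filter (\<lambda>x. x \<le> m) (take (Suc j) p)) = m # W"
    unfolding W_def using m assms by (simp add: take_Suc_conv_app_nth)
  have "move (drop (Suc j) p, m # W, [Suc m..<Suc n])
      (drop (Suc j) p, drop 1 (m # W), take 1 (m # W) @ [Suc m..<Suc n])"
    by (rule fork_move.pop) (use t_ge_1 in \<open>auto simp: one_enat_def\<close>)
  moreover have "take 1 (m # W) @ [Suc m..<Suc n] = [Suc (m - 1)..<Suc n]"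
    using m by (simp add: upt_conv_Cons)
  ultimately show ?thesis
    unfolding greedy_state_def stack by (simp add: W_def)
qed

lemma gaps_filled_upto_pos:
  assumes j: "j < n"
  shows "gaps_filled (p ! j - 1) (Suc j)"
  unfolding gaps_filled_def
proof (intro allI impI)
  fix i i' q
  assume h: "i < i'" "i' < Suc j" "q < n" "p ! i \<le> p ! j - 1" "p ! i' < p ! q" "p ! q < p ! i"
  have "p ! i < p ! j" using h(4) nth_p_bounds[OF j] by linarith
  then have "i' < j" "q \<noteq> j" using h by (auto simp: less_Suc_eq)
  show "i < q \<and> q < i'"
  proof (rule ccontr)
    assume "\<not> (i < q \<and> q < i')"
    moreover have "q \<noteq> i" "q \<noteq> i'" using h by auto
    ultimately have "q < i \<or> (i' < q \<and> q < j) \<or> j < q" using \<open>q \<noteq> j\<close> by auto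
    then show False
    proof (elim disjE conjE)
      assume "q < i"
      have "involved [2,3,1,4] p"
        by (rule involved_at_4[of q i i' j])
          (use \<open>q < i\<close> h \<open>i' < j\<close> \<open>p ! i < p ! j\<close> j in \<open>simp_all add: order_iso_def\<close>)
      with avoids_2314 show False ..
    next
      assume "i' < q" "q < j"
      have "involved [3,1,2,4] p"
        by (rule involved_at_4[of i i' q j])
          (use \<open>i' < q\<close> \<open>q < j\<close> h \<open>p ! i < p ! j\<close> j in \<open>simp_all add: order_iso_def\<close>)
      with avoids_3124 show False ..
    next
      assume "j < q"
      have "involved [3,1,4,2] p"
        by (rule involved_at_4[of i i' j q])
          (use \<open>j < q\<close> h \<open>i' < j\<close> \<open>p ! i < p ! j\<close> in \<open>simp_all add: order_iso_def\<close>)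
      with avoids_3142 show False ..
    qed
  qed
qed

lemma greedy_inv_pop_single:
  assumes inv: "greedy_inv m k" and j: "j < n" "p ! j = m" "k \<le> j"
  shows "greedy_inv (m - 1) (Suc j)"
proof -
  have "p ! i \<le> m - 1" if "Suc j \<le> i" "i < n" for i
  proof -
    have "p ! i \<le> m" using inv that j by (simp add: greedy_inv_def)
    moreover have "p ! i \<noteq> m" using nth_p_eq_iff[of i j] that j by auto
    ultimately show ?thesis by linarith
  qed
  then show ?thesis
    using inv j gaps_filled_upto_pos[of j] nth_p_bounds[of j] by (auto simp: greedy_inv_def)
qed

lemma pushed_since_decreasing:
  assumes gaps: "gaps_filled m k" and "k \<le> n" "p ! j = m"
    and "j \<le> i" "i < i'" "i' < k" "p ! i \<le> m" "p ! i' \<le> m"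
  shows "p ! i' < p ! i"
proof (rule ccontr)
  assume "\<not> p ! i' < p ! i"
  moreover have "p ! i' \<noteq> p ! i" using nth_p_eq_iff[of i' i] assms by auto
  ultimately have less: "p ! i < p ! i'" by simp
  have "i' \<noteq> j" "i \<noteq> j" using assms less by auto
  then have "j < i" "p ! i' < m"
    using assms nth_p_eq_iff[of i' j] by (auto simp: le_less)
  have "j < i' \<and> i' < i"
    by (rule gaps_filledD[OF gaps \<open>j < i\<close>]) (use less assms \<open>p ! i' < m\<close> in simp_all)
  with \<open>i < i'\<close> show False by simp
qed

lemma pushed_since_interval:
  assumes gaps: "gaps_filled m k" and "k \<le> n" "p ! j = m"
    and "j \<le> i" "i < k" "p ! i \<le> v" "v \<le> m"
  shows "v \<in> set (drop j (take k p))"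
proof -
  have "\<exists>i'. j \<le> i' \<and> i' < k \<and> p ! i' = v"
  proof (cases "v = p ! i \<or> v = m")
    case True
    then show ?thesis
    proof
      assume "v = p ! i"
      then show ?thesis using assms by blast
    next
      assume "v = m"
      then show ?thesis using assms by (intro exI[of _ j]) simp
    qed
  next
    case False
    then have between: "p ! i < v" "v < p ! j" using assms by auto
    have "1 \<le> v" "v \<le> n"
      using nth_p_bounds[of i] nth_p_bounds[of j] between assms by auto
    then obtain iv where iv: "iv < n" "p ! iv = v" using position_exists by blast
    have "i \<noteq> j" using between by auto
    then have "j < i" using assms(4) by simp
    then have "j < iv \<and> iv < i"
      by (rule gaps_filledD[OF gaps]) (use between iv assms in simp_all)
    then show ?thesis using iv assms(5) by (intro exI[of _ iv]) simp
  qed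
  then obtain i' where "j \<le> i'" "i' < k" "p ! i' = v" by blast
  then show ?thesis
    unfolding in_set_drop_take_iff using assms(2) by (intro exI[of _ i']) auto
qed

lemma pushed_since_run:
  assumes gaps: "gaps_filled m k" and "k \<le> n" "p ! j = m" "j < k"
  obtains b where "1 \<le> b" "b \<le> m" "filter (\<lambda>x. x \<le> m) (drop j (take k p)) = rev [b..<Suc m]"
proof -
  define D where "D = drop j (take k p)"
  define X where "X = filter (\<lambda>x. x \<le> m) D"
  define b where "b = Min (set X)"
  have "m \<in> set D"
    unfolding D_def in_set_drop_take_iff using assms(2-4) by (intro exI[of _ j]) simp
  then have "m \<in> set X" by (simp add: X_def)
  then have b: "b \<in> set X" "b \<le> m" unfolding b_def by (auto intro: Min_in)
  have b_min: "b \<le> x" if "x \<in> set X" for x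
    unfolding b_def using that by simp
  from b have "b \<in> set D" by (simp add: X_def)
  then obtain ib where ib: "j \<le> ib" "ib < k" "p ! ib = b"
    unfolding D_def in_set_drop_take_iff by blast
  have "set X = {b..m}"
  proof
    show "set X \<subseteq> {b..m}"
    proof
      fix x assume "x \<in> set X"
      then show "x \<in> {b..m}" using b_min by (simp add: X_def)
    qed
    show "{b..m} \<subseteq> set X"
      using pushed_since_interval[OF assms(1-3) ib(1,2)] ib(3) by (auto simp: X_def D_def)
  qed
  moreover have "sorted_wrt (>) X"
    unfolding X_def
  proof (intro sorted_wrt_filter_if, unfold sorted_wrt_iff_nth_less, intro allI impI)
    fix a a' assume a: "a < a'" "a' < length D" "D ! a \<le> m" "D ! a' \<le> m"
    then have "j + a' < k" "j + a' < n" by (auto simp: D_def)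
    then have "D ! a = p ! (j + a)" "D ! a' = p ! (j + a')"
      using a(1) by (simp_all add: D_def nth_drop_take)
    then show "D ! a' < D ! a"
      using pushed_since_decreasing[OF assms(1-3), of "j + a" "j + a'"] a \<open>j + a' < k\<close> by simp
  qed
  moreover have "1 \<le> b" using nth_p_bounds[of ib] ib assms(2) by simp
  ultimately have "X = rev [b..<Suc m]" by (intro sorted_wrt_greater_eq_rev_upt)
  with that \<open>1 \<le> b\<close> b(2) show ?thesis unfolding X_def D_def by blast
qed

lemma top_run_fits:
  assumes inv: "greedy_inv m k" and "j < k"
    and run: "filter (\<lambda>x. x \<le> m) (drop j (take k p)) = rev [b..<Suc m]"
  shows "enat (Suc m - b) \<le> t"
proof (rule ccontr)
  assume "\<not> enat (Suc m - b) \<le> t"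
  then obtain t' where t': "t = enat t'" "b + t' \<le> m"
    by (cases t) auto
  define v where "v = p ! (k - 1)"
  have k: "k - 1 < n" "m < v" using inv \<open>j < k\<close> by (auto simp: greedy_inv_def v_def)
  have "take k p = take (k - 1) p @ [v]"
    using k \<open>j < k\<close> take_Suc_conv_app_nth[of "k - 1" p] by (simp add: v_def)
  then have D: "drop j (take k p) = drop j (take (k - 1) p) @ [v]"
    using \<open>j < k\<close> k by simp
  then have "rev [b..<Suc m] = filter (\<lambda>x. x \<le> m) (drop j (take (k - 1) p))"
    using run k by simp
  then have run_v: "subseq (rev [b..<Suc m] @ [v]) (drop j (take k p))"
    unfolding D by (metis subseq_append subseq_filter_left)
  define a where "a = m - t'"
  have a: "b \<le> a" "a + t' = m" using t'(2) by (simp_all add: a_def)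
  have "subseq (rev [a..<a + t' + 1] @ [v]) (rev [b..<Suc m] @ [v])"
    using prefix_rev_upt[OF a(1), of "Suc m"] a(2) by (simp add: prefix_imp_subseq del: upt_Suc)
  then have "subseq (rev [a..<a + t' + 1] @ [v]) p"
    using run_v subseq_drop_take by (meson subseq_order.trans)
  moreover have "order_iso (decr_then_max t') (rev [a..<a + t' + 1] @ [v])"
    using a(2) k(2) by (intro order_iso_decr_then_max) simp
  ultimately have "involved (decr_then_max t') p"
    using involved_iff_subseq by blast
  with avoids_decr_then_max[OF t'(1)] show False ..
qed

lemma pop_run:
  assumes inv: "greedy_inv m k" and "j < k"
    and run: "filter (\<lambda>x. x \<le> m) (drop j (take k p)) = rev [b..<Suc m]" and "1 \<le> b" "b \<le> m"
  shows "move (greedy_state m k) (greedy_state (b - 1) k)"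
proof -
  define A where "A = filter (\<lambda>x. x \<le> b - 1) (take k p)"
  have k: "k \<le> n" "m \<le> n" using inv by (simp_all add: greedy_inv_def)
  have take_split: "take k p = take j p @ drop j (take k p)"
    using \<open>j < k\<close> by (metis append_take_drop_id min.absorb1 less_imp_le take_take)
  have "distinct (take k p)" using distinct_p by simp
  then have disj: "set (take j p) \<inter> set (drop j (take k p)) = {}"
    by (metis take_split distinct_append)
  have "filter (\<lambda>x. x \<le> m) (take j p) = filter (\<lambda>x. x \<le> b - 1) (take j p)"
  proof (intro filter_cong refl)
    fix x assume "x \<in> set (take j p)"
    then have "x \<notin> {b..m}"
      using disj subset_if_filter_eq_rev_upt[OF run] by blast
    then show "x \<le> m \<longleftrightarrow> x \<le> b - 1" using \<open>1 \<le> b\<close> \<open>b \<le> m\<close> by auto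
  qed
  moreover have "filter (\<lambda>x. x \<le> b - 1) (drop j (take k p)) = []"
  proof -
    have "filter (\<lambda>x. x \<le> b - 1) (drop j (take k p))
        = filter (\<lambda>x. x \<le> b - 1) (filter (\<lambda>x. x \<le> m) (drop j (take k p)))"
      unfolding filter_filter using \<open>b \<le> m\<close> by (intro filter_cong refl) arith
    then show ?thesis using \<open>1 \<le> b\<close> by (auto simp: run filter_empty_conv simp del: upt_Suc)
  qed
  ultimately have stack: "rev (filter (\<lambda>x. x \<le> m) (take k p)) = [b..<Suc m] @ rev A"
    unfolding A_def by (subst (1 2) take_split) (simp add: run)
  have "move (drop k p, [b..<Suc m] @ rev A, [Suc m..<Suc n])
      (drop k p, drop (Suc m - b) ([b..<Suc m] @ rev A),
        take (Suc m - b) ([b..<Suc m] @ rev A) @ [Suc m..<Suc n])"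
    by (rule fork_move.pop) (use top_run_fits[OF inv \<open>j < k\<close> run] \<open>b \<le> m\<close> in simp_all)
  moreover have "take (Suc m - b) ([b..<Suc m] @ rev A) @ [Suc m..<Suc n] = [Suc (b - 1)..<Suc n]"
  proof -
    have "[b..<Suc m] @ [Suc m..<Suc n] = [b..<Suc n]"
      using upt_add_eq_append[of b "Suc m" "n - m"] \<open>b \<le> m\<close> k by simp
    then show ?thesis using \<open>1 \<le> b\<close> by (simp del: upt_Suc)
  qed
  ultimately show ?thesis
    unfolding greedy_state_def stack by (simp add: A_def del: upt_Suc)
qed

lemma greedy_inv_pop_run:
  assumes inv: "greedy_inv m k" and "j < k"
    and run: "filter (\<lambda>x. x \<le> m) (drop j (take k p)) = rev [b..<Suc m]" and "b \<le> m"
  shows "greedy_inv (b - 1) k"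
proof -
  have "p ! i \<le> b - 1" if "k \<le> i" "i < n" for i
  proof (rule ccontr)
    assume "\<not> p ! i \<le> b - 1"
    moreover have "p ! i \<le> m" using inv that by (simp add: greedy_inv_def)
    ultimately have "p ! i \<in> set (drop j (take k p))"
      using subset_if_filter_eq_rev_upt[OF run] by auto
    then have "p ! i \<in> set (take k p)" by (rule in_set_dropD)
    moreover have "p ! i \<in> set (drop k p)"
    proof -
      have "i - k < length (drop k p)" "drop k p ! (i - k) = p ! i" using that by simp_all
      then show ?thesis by (metis nth_mem)
    qed
    ultimately show False
      using set_take_disj_set_drop_if_distinct[OF distinct_p, of k k] by blast
  qed
  then show ?thesis
    using inv \<open>j < k\<close> \<open>b \<le> m\<close> gaps_filled_mono[of m k "b - 1"]
    by (auto simp: greedy_inv_def)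
qed

lemma greedy_reaches_sorted: "greedy_inv m k \<Longrightarrow> move\<^sup>*\<^sup>* (greedy_state m k) (greedy_state 0 n)"
proof (induction m arbitrary: k rule: less_induct)
  case (less m)
  then have inv: "m \<le> n" "k \<le> n" "\<forall>i. k \<le> i \<longrightarrow> i < n \<longrightarrow> p ! i \<le> m" "gaps_filled m k"
    by (simp_all add: greedy_inv_def)
  show ?case
  proof (cases "m = 0")
    case True
    have "k = n"
    proof (rule ccontr)
      assume "k \<noteq> n"
      with inv(2) have "k < n" by simp
      with inv(3) nth_p_bounds[of k] True show False by auto
    qed
    with True show ?thesis by simp
  next
    case False
    then have "1 \<le> m" by simp
    then obtain j where j: "j < n" "p ! j = m" using position_exists inv(1) by blast
    show ?thesis
    proof (cases "k \<le> j")
      case True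
      have "move\<^sup>*\<^sup>* (greedy_state m k) (greedy_state m (Suc j))"
        by (rule push_steps) (use True j inv(3) in auto)
      also have "move (greedy_state m (Suc j)) (greedy_state (m - 1) (Suc j))"
        using j by (rule pop_single)
      also have "move\<^sup>*\<^sup>* (greedy_state (m - 1) (Suc j)) (greedy_state 0 n)"
        using False greedy_inv_pop_single[OF less.prems j True] by (intro less.IH) auto
      finally show ?thesis .
    next
      case False
      then have "j < k" by simp
      obtain b where b: "1 \<le> b" "b \<le> m" and
        run: "filter (\<lambda>x. x \<le> m) (drop j (take k p)) = rev [b..<Suc m]"
        using pushed_since_run[OF inv(4) inv(2) j(2) \<open>j < k\<close>] by blast
      have "move (greedy_state m k) (greedy_state (b - 1) k)"
        using less.prems \<open>j < k\<close> run b by (rule pop_run)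
      also have "move\<^sup>*\<^sup>* (greedy_state (b - 1) k) (greedy_state 0 n)"
        using greedy_inv_pop_run[OF less.prems \<open>j < k\<close> run b(2)] b by (intro less.IH) auto
      finally show ?thesis .
    qed
  qed
qed

lemma fork_sortable: "fork_sortable 1 t p"
  using greedy_reaches_sorted[OF greedy_inv_start]
  by (simp add: fork_sortable_def greedy_state_start greedy_state_sorted)

end


section \<open>The basis elements are not sortable\<close>

lemma fork_move_output_suffix: "fork_move s t a b \<Longrightarrow> suffix (snd (snd a)) (snd (snd b))"
  by (induction rule: fork_move.induct) (auto simp: suffix_def)

text \<open>Moves only put blocks on top of the output stack, so only states whose output is a suffix
  of the sorted list can still lead to it.\<close>

definition viable :: "nat \<Rightarrow> fstate \<Rightarrow> bool" where
  "viable N x \<longleftrightarrow> suffix (snd (snd x)) [1..<Suc N]"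

lemma suffix_upt: "suffix xs [a..<b] \<Longrightarrow> xs = [b - length xs..<b]"
proof -
  assume "suffix xs [a..<b]"
  then obtain zs where zs: "[a..<b] = zs @ xs" by (auto simp: suffix_def)
  then have "xs = drop (length zs) [a..<b]" by simp
  moreover have "length zs + length xs = b - a" using arg_cong[OF zs, of length] by simp
  ultimately show ?thesis by (cases "a + length zs \<le> b") auto
qed

lemma viable_reachable_invariant:
  assumes "(fork_move s t)\<^sup>*\<^sup>* a b" "viable N b" "P a"
    and step: "\<And>x y. P x \<Longrightarrow> fork_move s t x y \<Longrightarrow> viable N y \<Longrightarrow> P y"
  shows "P b"
  using assms(1,2)
proof (induction rule: rtranclp_induct)
  case base
  show ?case by (rule assms(3))
next
  case (step y z)
  then have "viable N y"
    using fork_move_output_suffix unfolding viable_def by (metis suffix_order.trans)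
  with step show ?case using assms(4) by blast
qed

lemma not_fork_sortable_if_invariant:
  assumes "P (p, [], [])" "\<not> P ([], [], [1..<Suc (length p)])"
    and "\<And>x y. P x \<Longrightarrow> fork_move s t x y \<Longrightarrow> viable (length p) y \<Longrightarrow> P y"
  shows "\<not> fork_sortable s t p"
  using viable_reachable_invariant[of s t "(p, [], [])" _ "length p" P] assms
  by (auto simp: fork_sortable_def viable_def)

lemma fork_move_1E:
  assumes "fork_move 1 t a b"
  obtains (push) x inp w out where "a = (x # inp, w, out)" "b = (inp, x # w, out)"
  | (pop) l inp w out where "1 \<le> l" "enat l \<le> t" "l \<le> length w"
      "a = (inp, w, out)" "b = (inp, drop l w, take l w @ out)"
  using assms
proof cases
  case (push k inp w out)
  then have "k = 1" by (simp add: one_enat_def)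
  with push show ?thesis using that(1) by (cases inp) auto
next
  case (pop l w inp out)
  then show ?thesis using that(2) by blast
qed

text \<open>Pops of every length are offered, so these successors cover those of every t.\<close>

definition fork_succs :: "fstate \<Rightarrow> fstate list" where
  "fork_succs x = (case x of (inp, w, out) \<Rightarrow>
     (case inp of [] \<Rightarrow> [] | y # inp' \<Rightarrow> [(inp', y # w, out)]) @
     map (\<lambda>l. (inp, drop l w, take l w @ out)) [1..<Suc (length w)])"

lemma fork_move_1_in_succs: "fork_move 1 t x y \<Longrightarrow> y \<in> set (fork_succs x)"
  by (erule fork_move_1E) (auto simp: fork_succs_def)

lemma not_fork_sortable_by_certificate:
  assumes "(p, [], []) \<in> set R" "([], [], [1..<Suc (length p)]) \<notin> set R"
    and "list_all (\<lambda>x. list_all (\<lambda>y. viable (length p) y \<longrightarrow> y \<in> set R) (fork_succs x)) R"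
  shows "\<not> fork_sortable 1 t p"
  using assms fork_move_1_in_succs
  by (intro not_fork_sortable_if_invariant[where P = "\<lambda>x. x \<in> set R"]) (auto simp: list_all_iff)

text \<open>Each certificate lists the viable states reachable from the permutation.\<close>

lemma not_fork_sortable_2314: "\<not> fork_sortable 1 t [2,3,1,4]"
  by (rule not_fork_sortable_by_certificate[where R =
      "[([], [1,3,2], [4]), ([], [4,1,3,2], []), ([1,4], [3,2], []), ([2,3,1,4], [], []),
        ([3,1,4], [2], []), ([4], [1,3,2], [])]"]) code_simp+

lemma not_fork_sortable_3124: "\<not> fork_sortable 1 t [3,1,2,4]"
  by (rule not_fork_sortable_by_certificate[where R =
      "[([], [2,1,3], [4]), ([], [4,2,1,3], []), ([1,2,4], [3], []), ([2,4], [1,3], []),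
        ([3,1,2,4], [], []), ([4], [2,1,3], [])]"]) code_simp+

lemma not_fork_sortable_3142: "\<not> fork_sortable 1 t [3,1,4,2]"
  by (rule not_fork_sortable_by_certificate[where R =
      "[([], [2,1,3], [4]), ([], [2,4,1,3], []), ([1,4,2], [3], []), ([2], [1,3], [4]),
        ([2], [4,1,3], []), ([3,1,4,2], [], []), ([4,2], [1,3], [])]"]) code_simp+

text \<open>The entries of decr_then_max t can only be pushed one by one, since popping any of them
  before t+2 is pushed, or together with t+2, spoils the output.\<close>

definition decr_then_max_reachable :: "nat \<Rightarrow> fstate \<Rightarrow> bool" where
  "decr_then_max_reachable t x \<longleftrightarrow>
     (\<exists>k \<le> t + 2. x = (drop k (decr_then_max t), rev (take k (decr_then_max t)), [])) \<or>
     x = ([], [1..<t + 2], [t + 2])"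

lemma rev_decr_then_max: "rev (decr_then_max t) = (t + 2) # [1..<t + 2]"
  by (simp add: decr_then_max_def del: upt_Suc)

lemma max_notin_take_decr_then_max: "k < t + 2 \<Longrightarrow> t + 2 \<notin> set (take k (decr_then_max t))"
  by (auto simp: decr_then_max_def dest: in_set_takeD simp del: upt_Suc)

lemma decr_then_max_reachable_push:
  assumes "decr_then_max_reachable t (x # inp, w, out)"
  shows "decr_then_max_reachable t (inp, x # w, out)"
proof -
  define L where "L = decr_then_max t"
  obtain k where k: "k \<le> t + 2" "drop k L = x # inp" "w = rev (take k L)" "out = []"
    using assms by (auto simp: decr_then_max_reachable_def L_def)
  then have "k < length L" by (metis drop_all list.simps(3) not_le)
  then have "drop k L = L ! k # drop (Suc k) L" "take (Suc k) L = take k L @ [L ! k]"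
    by (simp_all add: Cons_nth_drop_Suc take_Suc_conv_app_nth)
  with k \<open>k < length L\<close> show ?thesis
    by (auto simp: decr_then_max_reachable_def L_def intro!: exI[of _ "Suc k"])
qed

lemma decr_then_max_reachable_pop:
  assumes reach: "decr_then_max_reachable t (inp, w, out)"
    and l: "1 \<le> l" "l \<le> t" "l \<le> length w"
    and "viable (t + 2) (inp, drop l w, take l w @ out)"
  shows "decr_then_max_reachable t (inp, drop l w, take l w @ out)"
proof -
  note upt_Suc [simp del]
  define N where "N = t + 2"
  have "suffix (take l w @ out) [1..<Suc N]"
    using assms(5) by (simp add: viable_def N_def)
  then have out: "take l w @ out = [Suc N - length (take l w @ out)..<Suc N]"
    by (rule suffix_upt)
  from reach consider
    (pushing) k where "k \<le> N" "inp = drop k (decr_then_max t)"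
      "w = rev (take k (decr_then_max t))" "out = []"
    | (pushed) "inp = []" "w = [1..<N]" "out = [N]"
    by (auto simp: decr_then_max_reachable_def N_def)
  then show ?thesis
  proof cases
    case (pushing k)
    show ?thesis
    proof (cases "k < N")
      case True
      have "N \<in> set (take l w)" using out l(1,3) pushing(4) by (simp add: Suc_le_eq)
      with True pushing(3) max_notin_take_decr_then_max show ?thesis
        by (auto simp: N_def dest: in_set_takeD)
    next
      case False
      then have w: "w = N # [1..<N]" using pushing(1,3) by (simp add: rev_decr_then_max N_def)
      have "l = 1"
      proof (rule ccontr)
        assume "l \<noteq> 1"
        then have "hd (take l w @ out) = N" using l(1) w by simp
        moreover have "take l w @ out = [Suc N - l..<Suc N]" using out l(3) pushing(4) by simp
        moreover have "hd [Suc N - l..<Suc N] = Suc N - l" using l(1) by (simp add: upt_conv_Cons)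
        moreover have "l \<le> N" using l(3) w by (simp add: N_def)
        ultimately show False using l(1) \<open>l \<noteq> 1\<close> by simp
      qed
      then show ?thesis using pushing(1,2,4) w False
        by (simp add: decr_then_max_reachable_def N_def)
    qed
  next
    case pushed
    have "l < N - 1" using l(2) by (simp add: N_def)
    then have "hd (take l w @ out) = 1" using pushed l(1) by (simp add: hd_append)
    moreover have "length (take l w @ out) = Suc l" using pushed \<open>l < N - 1\<close> by simp
    ultimately show ?thesis using out \<open>l < N - 1\<close> by (simp add: N_def)
  qed
qed

lemma not_fork_sortable_decr_then_max: "\<not> fork_sortable 1 (enat t) (decr_then_max t)"
proof (rule not_fork_sortable_if_invariant[where P = "decr_then_max_reachable t"])
  show "decr_then_max_reachable t (decr_then_max t, [], [])"
    by (auto simp: decr_then_max_reachable_def intro: exI[of _ 0])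
  show "\<not> decr_then_max_reachable t ([], [], [1..<Suc (length (decr_then_max t))])"
    by (auto simp: decr_then_max_reachable_def upt_conv_Cons simp del: upt_Suc)
next
  fix x y
  assume reach: "decr_then_max_reachable t x" and move: "fork_move 1 (enat t) x y"
    and "viable (length (decr_then_max t)) y"
  from move show "decr_then_max_reachable t y"
  proof (cases rule: fork_move_1E)
    case push
    then show ?thesis using reach by (simp add: decr_then_max_reachable_push)
  next
    case pop
    then show ?thesis using reach \<open>viable _ y\<close> by (simp add: decr_then_max_reachable_pop)
  qed
qed

section \<open>Minimal unsortable permutations\<close>

lemma forkU_eqI:
  assumes basis: "\<And>L. L \<in> S \<Longrightarrow> is_perm L \<and> \<not> fork_sortable s t L"
    and avoiders: "\<And>q. is_perm q \<Longrightarrow> (\<forall>L\<in>S. \<not> involved L q) \<Longrightarrow> fork_sortable s t q"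
    and antichain: "\<And>L L'. L \<in> S \<Longrightarrow> L' \<in> S \<Longrightarrow> involved L' L \<Longrightarrow> L' = L"
  shows "forkU s t = S"
proof
  show "forkU s t \<subseteq> S"
  proof
    fix p assume "p \<in> forkU s t"
    then have p: "is_perm p" "\<not> fork_sortable s t p"
      and minimal: "\<And>q. is_perm q \<Longrightarrow> involved q p \<Longrightarrow> q \<noteq> p \<Longrightarrow> fork_sortable s t q"
      by (auto simp: forkU_def forkF_def)
    then obtain L where "L \<in> S" "involved L p" using avoiders by blast
    then show "p \<in> S" using basis minimal by (metis p(2))
  qed
  show "S \<subseteq> forkU s t"
  proof
    fix L assume L: "L \<in> S"
    have "fork_sortable s t q" if q: "is_perm q" "involved q L" "q \<noteq> L" for q
    proof (rule ccontr)
      assume "\<not> fork_sortable s t q"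
      then obtain L' where "L' \<in> S" "involved L' q" using avoiders q(1) by blast
      then have "involved L q" using antichain L involved_trans q(2) by metis
      then have "q = L"
        using involved_length_eq involved_length_le basis L q by blast
      with q(3) show False ..
    qed
    then show "L \<in> forkU s t" using basis L by (auto simp: forkU_def forkF_def)
  qed
qed

definition basis_1 :: "enat \<Rightarrow> nat list set" where
  "basis_1 t = {[2,3,1,4], [3,1,2,4], [3,1,4,2]} \<union> {decr_then_max t' | t'. t = enat t'}"

lemma basis_1E:
  assumes "L \<in> basis_1 t"
  obtains "L = [2,3,1,4]" | "L = [3,1,2,4]" | "L = [3,1,4,2]"
  | t' where "t = enat t'" "L = decr_then_max t'"
  using assms unfolding basis_1_def by blast

lemma is_perm_basis_1:
  assumes "L \<in> basis_1 t"
  shows "is_perm L"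
proof -
  have "is_perm [2,3,1,4]" "is_perm [3,1,2,4]" "is_perm [3,1,4,2]"
    unfolding is_perm_def by code_simp+
  with assms show ?thesis
    by (elim basis_1E) (simp_all only: is_perm_decr_then_max)
qed

lemma not_fork_sortable_basis_1: "L \<in> basis_1 t \<Longrightarrow> \<not> fork_sortable 1 t L"
  by (erule basis_1E) (simp_all only: not_fork_sortable_2314 not_fork_sortable_3124
      not_fork_sortable_3142 not_fork_sortable_decr_then_max not_False_eq_True)

lemma fork_sortable_if_avoids_basis_1:
  assumes "1 \<le> t" "is_perm q" "\<forall>L\<in>basis_1 t. \<not> involved L q"
  shows "fork_sortable 1 t q"
proof -
  interpret basis_avoiding q t
    using assms by unfold_locales (auto simp: basis_1_def)
  show ?thesis by (rule fork_sortable)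
qed

lemma basis_1_antichain:
  assumes t: "\<And>t'. t = enat t' \<Longrightarrow> 2 \<le> t'"
    and L: "L \<in> basis_1 t" and L': "L' \<in> basis_1 t" and "involved L' L"
  shows "L' = L"
proof -
  have "4 \<le> length L'"
    using L' by (rule basis_1E) (simp_all add: t)
  from L show "L' = L"
  proof (rule basis_1E)
    fix t' assume t': "t = enat t'" "L = decr_then_max t'"
    then have desc: "L' ! j < L' ! i" if "i < j" "Suc j < length L'" for i j
      using involved_decr_then_max_nth_less \<open>involved L' L\<close> that by blast
    from L' show "L' = L"
      by (rule basis_1E) (use t' desc[of 0 1] desc[of 1 2] in simp_all)
  qed (use involved_length_eq[OF is_perm_basis_1[OF L'] is_perm_basis_1[OF L] \<open>involved L' L\<close>]
      \<open>4 \<le> length L'\<close> in simp_all)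
qed

lemma forkU_1_eq_basis_1:
  assumes "1 \<le> t" "\<And>t'. t = enat t' \<Longrightarrow> 2 \<le> t'"
  shows "forkU 1 t = basis_1 t"
  using is_perm_basis_1 not_fork_sortable_basis_1 fork_sortable_if_avoids_basis_1[OF assms(1)]
    basis_1_antichain[OF assms(2)]
  by (intro forkU_eqI) blast+

theorem mainTheorem4:
  shows "forkU 1 \<infinity> = {[2,3,1,4], [3,1,2,4], [3,1,4,2]} \<and>
    (\<forall>t::nat. t \<ge> 2 \<longrightarrow>
      forkU 1 (enat t) = {[2,3,1,4], [3,1,2,4], [3,1,4,2], rev [1..<t+2] @ [t+2]})"
proof (intro conjI allI impI)
  show "forkU 1 \<infinity> = {[2,3,1,4], [3,1,2,4], [3,1,4,2]}"
    using forkU_1_eq_basis_1[of \<infinity>] by (simp add: basis_1_def)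
  fix t :: nat assume "t \<ge> 2"
  then have "forkU 1 (enat t) = basis_1 (enat t)"
    by (intro forkU_1_eq_basis_1) (simp_all add: one_enat_def)
  then show "forkU 1 (enat t) = {[2,3,1,4], [3,1,2,4], [3,1,4,2], rev [1..<t+2] @ [t+2]}"
    by (auto simp: basis_1_def decr_then_max_def)
qed

end
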